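(* Let $\mathcal{A}$ be an alternating parity automaton and let $\mathcal{B}_{\mathcal{A}}$ be constructed from $\mathcal{A}$ as described in the context. If $\mathcal{B}_{\mathcal{A}}$ is GFG, then $\mathcal{A}$ is $\exists$-GFG.
   Context: An alternating parity automaton $\mathcal{A}=(\Sigma,Q,\iota,\delta,\alpha)$ has finite alphabet $\Sigma$, states $Q$, initial state $\iota$, transition function $\delta\colon Q\times\Sigma\to\mathcal{B}^+(Q)$ (positive Boolean formulas over atoms in $Q$), and priorities $\alpha\colon Q\times\Sigma\times Q\to\Gamma\subseteq\mathbb{N}$ on transitions; a sequence of transitions is accepting iff the maximal priority seen infinitely often is even. The model-checking game on $w=a_0a_1\dots$: from $\iota$, in round $i$ from $q_i$ the players descend $\delta(q_i,a_i)$, Eve choosing at disjunctions, Adam at conjunctions, to an atom $q_{i+1}$; Eve wins iff the transition sequence is accepting; $w\in L(\mathcal{A})$ iff Eve wins. Eve's letter game: each round Adam picks a letter and the players descend the transition condition of the current state over it; Eve wins iff the generated word is not in $L(\mathcal{A})$ or the generated path is accepting; $\mathcal{A}$ is $\exists$-GFG iff Eve wins this game. Boxes: for a letter $a$, a local strategy $\sigma$ chooses for each state $q$ and each subformula $\psi_1\vee\psi_2$ of $\delta(q,a)$ one disjunct; the box $\beta(\mathcal{A},a,\sigma)$ is the set of $(q,a,q')$ such that atom $q'$ is reachable from $\delta(q,a)$ following $\sigma$ at disjunctions and either conjunct at conjunctions; $\mathrm{Boxes}_{\mathcal{A},a}$ is the set of these boxes, $\mathrm{Boxes}_{\mathcal{A}}=\bigcup_a\mathrm{Boxes}_{\mathcal{A},a}$.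 A word $\beta_0\beta_1\dots$ over $\mathrm{Boxes}_{\mathcal{A}}$ is universally accepting if every transition sequence $(q_i,a_i,q_{i+1})$ with $q_0=\iota$ and $(q_i,a_i,q_{i+1})\in\beta_i$ is accepting. Construction: let $\mathcal{B}$ be a deterministic parity automaton over alphabet $\mathrm{Boxes}_{\mathcal{A}}$ recognising exactly the universally accepting words. $\mathcal{B}_{\mathcal{A}}$ is the nondeterministic automaton over $\Sigma$ with the states, initial state and acceptance condition of $\mathcal{B}$ that, on reading a letter $a$ in state $p$, nondeterministically guesses a box $\beta\in\mathrm{Boxes}_{\mathcal{A},a}$ and moves to $\delta_{\mathcal{B}}(p,\beta)$; runs of $\mathcal{B}_{\mathcal{A}}$ on $w=w_0w_1\dots$ correspond to sequences of boxes $\beta_i\in\mathrm{Boxes}_{\mathcal{A},w_i}$, and such a run is accepting iff $\mathcal{B}$ accepts $\beta_0\beta_1\dots$. $\mathcal{B}_{\mathcal{A}}$ is GFG iff Eve wins the game in which, each round, Adam picks a letter $a$ and Eve picks a box in $\mathrm{Boxes}_{\mathcal{A},a}$, Eve winning iff the generated word is not in $L(\mathcal{B}_{\mathcal{A}})$ or the generated run is accepting. *)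

theory Defs
  imports Main
begin

datatype 'q pbf = Atom 'q | And "'q pbf" "'q pbf" | Or "'q pbf" "'q pbf"

fun atoms :: "'q pbf \<Rightarrow> 'q set" where
  "atoms (Atom q) = {q}"
| "atoms (And f g) = atoms f \<union> atoms g"
| "atoms (Or f g) = atoms f \<union> atoms g"

record ('q, 'a) apa =
  alph :: "'a set"
  states :: "'q set"
  init :: 'q
  trans :: "'q \<Rightarrow> 'a \<Rightarrow> 'q pbf"
  prio :: "'q \<Rightarrow> 'a \<Rightarrow> 'q \<Rightarrow> nat"

definition wf_apa :: "('q, 'a) apa \<Rightarrow> bool" where
  "wf_apa A \<longleftrightarrow> finite (alph A) \<and> finite (states A) \<and> init A \<in> states A \<and>
     (\<forall>q\<in>states A. \<forall>a\<in>alph A. atoms (trans A q a) \<subseteq> states A)"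

definition parity_acc :: "(nat \<Rightarrow> nat) \<Rightarrow> bool" where
  "parity_acc f \<longleftrightarrow> (\<exists>p. even p \<and> (INFM i. f i = p) \<and> (\<forall>p'. (INFM i. f i = p') \<longrightarrow> p' \<le> p))"

definition acc_trans :: "('q, 'a) apa \<Rightarrow> (nat \<Rightarrow> 'q \<times> 'a \<times> 'q) \<Rightarrow> bool" where
  "acc_trans A t \<longleftrightarrow> parity_acc (\<lambda>i. case t i of (q, a, q') \<Rightarrow> prio A q a q')"

text \<open>Descending a formula: positions in the formula tree are bool lists
  (False = left, True = right); Eve chooses at disjunctions, Adam at conjunctions.\<close>
fun descend :: "(bool list \<Rightarrow> bool) \<Rightarrow> (bool list \<Rightarrow> bool) \<Rightarrow> bool list \<Rightarrow> 'q pbf \<Rightarrow> 'q" where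
  "descend e u p (Atom q) = q"
| "descend e u p (Or f g) =
     (if e p then descend e u (p @ [True]) g else descend e u (p @ [False]) f)"
| "descend e u p (And f g) =
     (if u p then descend e u (p @ [True]) g else descend e u (p @ [False]) f)"

type_synonym ('q, 'a) hist = "('q \<times> 'a \<times> 'q) list"
type_synonym ('q, 'a) strat = "('q, 'a) hist \<Rightarrow> 'a \<Rightarrow> bool list \<Rightarrow> bool"

text \<open>Generic play: the letter of each round is given by \<open>ltr\<close> (a function of the history),
  Eve's and Adam's strategies see the history, the current letter and the current
  position in the formula.\<close>
fun play :: "('q, 'a) apa \<Rightarrow> (('q, 'a) hist \<Rightarrow> 'a) \<Rightarrow> ('q, 'a) strat \<Rightarrow> ('q, 'a) strat
              \<Rightarrow> nat \<Rightarrow> ('q, 'a) hist \<times> 'q" where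
  "play A ltr e u 0 = ([], init A)"
| "play A ltr e u (Suc n) =
     (case play A ltr e u n of (h, q) \<Rightarrow>
        (let a = ltr h; q' = descend (e h a) (u h a) [] (trans A q a)
         in (h @ [(q, a, q')], q')))"

definition play_trans :: "('q, 'a) apa \<Rightarrow> (('q, 'a) hist \<Rightarrow> 'a) \<Rightarrow> ('q, 'a) strat \<Rightarrow> ('q, 'a) strat
                          \<Rightarrow> nat \<Rightarrow> 'q \<times> 'a \<times> 'q" where
  "play_trans A ltr e u i = fst (play A ltr e u (Suc i)) ! i"

text \<open>Model-checking game on a word \<open>w\<close>: the letter of round \<open>i\<close> is \<open>w i\<close>.\<close>
definition apa_lang :: "('q, 'a) apa \<Rightarrow> (nat \<Rightarrow> 'a) set" where
  "apa_lang A = {w. (\<forall>i. w i \<in> alph A) \<and>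
      (\<exists>e. \<forall>u. acc_trans A (play_trans A (\<lambda>h. w (length h)) e u))}"

text \<open>Eve's letter game: Adam chooses letters (from the alphabet) and resolves conjunctions.\<close>
definition exists_gfg :: "('q, 'a) apa \<Rightarrow> bool" where
  "exists_gfg A \<longleftrightarrow> (\<exists>e. \<forall>ltr u. (\<forall>h. ltr h \<in> alph A) \<longrightarrow>
      ((\<lambda>i. fst (snd (play_trans A ltr e u i))) \<notin> apa_lang A \<or> acc_trans A (play_trans A ltr e u)))"

text \<open>A local strategy for a letter chooses, for each state and each disjunctive subformula,
  one disjunct (True = right disjunct).\<close>
fun reach :: "('q pbf \<Rightarrow> bool) \<Rightarrow> 'q pbf \<Rightarrow> 'q set" where
  "reach s (Atom q) = {q}"
| "reach s (And f g) = reach s f \<union> reach s g"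
| "reach s (Or f g) = (if s (Or f g) then reach s g else reach s f)"

definition box :: "('q, 'a) apa \<Rightarrow> 'a \<Rightarrow> ('q \<Rightarrow> 'q pbf \<Rightarrow> bool) \<Rightarrow> ('q \<times> 'a \<times> 'q) set" where
  "box A a \<sigma> = {(q, a, q') | q q'. q \<in> states A \<and> q' \<in> reach (\<sigma> q) (trans A q a)}"

definition boxes_letter :: "('q, 'a) apa \<Rightarrow> 'a \<Rightarrow> ('q \<times> 'a \<times> 'q) set set" where
  "boxes_letter A a = {box A a \<sigma> | \<sigma>. True}"

definition boxes :: "('q, 'a) apa \<Rightarrow> ('q \<times> 'a \<times> 'q) set set" where
  "boxes A = (\<Union>a\<in>alph A. boxes_letter A a)"

definition univ_acc :: "('q, 'a) apa \<Rightarrow> (nat \<Rightarrow> ('q \<times> 'a \<times> 'q) set) \<Rightarrow> bool" where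
  "univ_acc A \<beta> \<longleftrightarrow> (\<forall>t. fst (t 0) = init A \<and>
       (\<forall>i. snd (snd (t i)) = fst (t (Suc i))) \<and> (\<forall>i. t i \<in> \<beta> i) \<longrightarrow> acc_trans A t)"

record ('p, 'b) dpa =
  dstates :: "'p set"
  dinit :: 'p
  dtrans :: "'p \<Rightarrow> 'b \<Rightarrow> 'p"
  dprio :: "'p \<Rightarrow> 'b \<Rightarrow> 'p \<Rightarrow> nat"

definition wf_dpa :: "('p, 'b) dpa \<Rightarrow> 'b set \<Rightarrow> bool" where
  "wf_dpa B S \<longleftrightarrow> finite (dstates B) \<and> dinit B \<in> dstates B \<and>
     (\<forall>p\<in>dstates B. \<forall>b\<in>S. dtrans B p b \<in> dstates B)"

fun drun :: "('p, 'b) dpa \<Rightarrow> (nat \<Rightarrow> 'b) \<Rightarrow> nat \<Rightarrow> 'p" where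
  "drun B w 0 = dinit B"
| "drun B w (Suc n) = dtrans B (drun B w n) (w n)"

definition dpa_accepts :: "('p, 'b) dpa \<Rightarrow> (nat \<Rightarrow> 'b) \<Rightarrow> bool" where
  "dpa_accepts B w \<longleftrightarrow> parity_acc (\<lambda>i. dprio B (drun B w i) (w i) (drun B w (Suc i)))"

definition recognises_univ_acc :: "('q, 'a) apa \<Rightarrow> ('p, ('q \<times> 'a \<times> 'q) set) dpa \<Rightarrow> bool" where
  "recognises_univ_acc A B \<longleftrightarrow> wf_dpa B (boxes A) \<and>
     (\<forall>\<beta>. (\<forall>i. \<beta> i \<in> boxes A) \<longrightarrow> (dpa_accepts B \<beta> \<longleftrightarrow> univ_acc A \<beta>))"

text \<open>Runs of B_A on \<open>w\<close> correspond to box sequences with \<open>\<beta> i \<in> boxes_letter A (w i)\<close>.\<close>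
definition BA_lang :: "('q, 'a) apa \<Rightarrow> ('p, ('q \<times> 'a \<times> 'q) set) dpa \<Rightarrow> (nat \<Rightarrow> 'a) set" where
  "BA_lang A B = {w. (\<forall>i. w i \<in> alph A) \<and>
      (\<exists>\<beta>. (\<forall>i. \<beta> i \<in> boxes_letter A (w i)) \<and> dpa_accepts B \<beta>)}"

fun gfg_play :: "(('a \<times> 'b) list \<Rightarrow> 'a) \<Rightarrow> (('a \<times> 'b) list \<Rightarrow> 'a \<Rightarrow> 'b) \<Rightarrow> nat \<Rightarrow> ('a \<times> 'b) list" where
  "gfg_play ad ev 0 = []"
| "gfg_play ad ev (Suc n) = (let h = gfg_play ad ev n; a = ad h in h @ [(a, ev h a)])"

text \<open>GFG game of B_A: Adam picks letters, Eve picks boxes for the current letter.\<close>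
definition BA_gfg :: "('q, 'a) apa \<Rightarrow> ('p, ('q \<times> 'a \<times> 'q) set) dpa \<Rightarrow> bool" where
  "BA_gfg A B \<longleftrightarrow> (\<exists>ev. (\<forall>h a. a \<in> alph A \<longrightarrow> ev h a \<in> boxes_letter A a) \<and>
     (\<forall>ad. (\<forall>h. ad h \<in> alph A) \<longrightarrow>
        ((\<lambda>i. fst (gfg_play ad ev (Suc i) ! i)) \<notin> BA_lang A B \<or>
         dpa_accepts B (\<lambda>i. snd (gfg_play ad ev (Suc i) ! i)))))"

end

(*
  Let w be in L(A). In the model-checking game on w, bundle all of Eve's disjunction choices
  of a round into one move committing to the atoms reachable under a local strategy. This is
  a finitely branching parity game with finitely many priorities, so it is positionally
  determined (Zielonka's recursion, with unions of dominions for the infinite arena). Adam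
  cannot win, as he could then defeat Eve's winning strategy; and a positional winning
  strategy of Eve chooses one local strategy per round and state, i.e. a universally
  accepting box word. Hence L(A) is contained in L(B_A).

  In the letter game Eve runs the GFG strategy of B_A on the letters played so far and
  resolves disjunctions by the local strategy of the box it picks. The play then follows
  these boxes, and if the word is in L(A), hence in L(B_A), the box word is accepted by B,
  i.e. universally accepting, so the play is accepting.
*)

theory Submission
  imports Defs "HOL-Library.Infinite_Set"
begin

lemma INFM_nat_shift: "(INFM k. P (k + n)) \<longleftrightarrow> (INFM k::nat. P k)"
  by (simp add: frequently_def cofinite_eq_sequentially eventually_sequentially_seg[of "\<lambda>k. \<not> P k"])

lemma parity_acc_shift: "parity_acc (\<lambda>k. f (k + n)) \<longleftrightarrow> parity_acc f"
  unfolding parity_acc_def using INFM_nat_shift[of "\<lambda>k. f k = _" n] by simp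

lemma parity_acc_top_priority:
  assumes "\<And>k. f k \<le> d" and "INFM k. f k = d"
  shows "parity_acc f \<longleftrightarrow> even d"
proof -
  have below: "p \<le> d" if "INFM k. f k = p" for p
    using that assms(1) by (auto elim: INFM_E)
  show ?thesis
  proof
    assume "parity_acc f"
    then obtain p where "even p" "INFM k. f k = p" "\<forall>p'. (INFM k. f k = p') \<longrightarrow> p' \<le> p"
      unfolding parity_acc_def by blast
    with below assms(2) have "p = d" by (simp add: order_antisym)
    with \<open>even p\<close> show "even d" by simp
  next
    assume "even d"
    with below assms(2) show "parity_acc f" unfolding parity_acc_def by blast
  qed
qed

lemma parity_acc_pad_zeros:
  assumes "finite (range f)" and "INFM k. g k = 0"
    and "\<And>p. p \<noteq> 0 \<Longrightarrow> (INFM k. g k = p) \<longleftrightarrow> (INFM n. f n = p)"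
  shows "parity_acc g \<longleftrightarrow> parity_acc f"
proof -
  obtain p0 where p0: "INFM n. f n = p0"
    using pigeonhole_infinite[of UNIV f] assms(1) by (auto simp: INFM_iff_infinite)
  have inf_g: "(INFM k. g k = p) \<longleftrightarrow> p = 0 \<or> (INFM n. f n = p)" for p
    using assms(2,3) by (cases "p = 0") auto
  show ?thesis
  proof
    assume "parity_acc g"
    then obtain p where p: "even p" "p = 0 \<or> (INFM n. f n = p)"
      and max: "\<forall>p'. p' = 0 \<or> (INFM n. f n = p') \<longrightarrow> p' \<le> p"
      unfolding parity_acc_def inf_g by blast
    have "INFM n. f n = p"
      using p(2) max p0 by (metis le_0_eq)
    with p(1) max show "parity_acc f" unfolding parity_acc_def by blast
  next
    assume "parity_acc f"
    then show "parity_acc g" unfolding parity_acc_def inf_g by blast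
  qed
qed

lemma INFM_div_mod:
  fixes m r :: nat
  assumes "r < m"
  shows "(INFM k. k mod m = r \<and> P (k div m)) \<longleftrightarrow> (INFM n::nat. P n)"
  unfolding INFM_nat_le
proof safe
  fix n0
  assume "\<forall>k0. \<exists>k\<ge>k0. k mod m = r \<and> P (k div m)"
  then obtain k where k: "k \<ge> m * n0" "P (k div m)" by blast
  have "n0 = m * n0 div m" using assms by simp
  also have "\<dots> \<le> k div m" using k(1) by (rule div_le_mono)
  finally show "\<exists>n\<ge>n0. P n" using k(2) by blast
next
  fix k0
  assume "\<forall>n0. \<exists>n\<ge>n0. P n"
  then obtain n where n: "n \<ge> k0" "P n" by blast
  have "n \<le> m * n" using assms by simp
  then have "k0 \<le> m * n + r" using n(1) by linarith
  moreover have "(m * n + r) mod m = r" "(m * n + r) div m = n" using assms by simp_all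
  ultimately show "\<exists>k\<ge>k0. k mod m = r \<and> P (k div m)"
    using n(2) by metis
qed

lemma mod_3_cases:
  fixes k :: nat
  obtains n where "k = 3 * n" | n where "k = Suc (3 * n)" | n where "k = Suc (Suc (3 * n))"
proof -
  have k: "3 * (k div 3) + k mod 3 = k" by simp
  have "k mod 3 < 3" by simp
  then consider "k mod 3 = 0" | "k mod 3 = 1" | "k mod 3 = 2" by linarith
  then show thesis
  proof cases
    case 1
    with k have "k = 3 * (k div 3)" by simp
    then show thesis by (rule that(1))
  next
    case 2
    with k have "k = Suc (3 * (k div 3))" by simp
    then show thesis by (rule that(2))
  next
    case 3
    with k have "k = Suc (Suc (3 * (k div 3)))" by simp
    then show thesis by (rule that(3))
  qed
qed

lemma wf_eventually_constant:
  assumes "wf R" and "\<And>k. x (Suc k) = x k \<or> (x (Suc k), x k) \<in> R"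
  shows "\<exists>N. \<forall>k\<ge>N. x k = x N"
proof -
  obtain N where N: "x N \<in> range x" and min: "\<And>y. (y, x N) \<in> R \<Longrightarrow> y \<notin> range x"
    using wfE_min[OF assms(1), of "x 0" "range x"] by blast
  have "x (N + j) = x N" for j
  proof (induction j)
    case (Suc j)
    then show ?case using assms(2)[of "N + j"] min[of "x (Suc (N + j))"] by auto
  qed simp
  then show ?thesis by (metis le_add_diff_inverse)
qed

lemma exists_total_wf: "\<exists>R :: 'a rel. wf R \<and> (\<forall>x y. x \<noteq> y \<longrightarrow> (x, y) \<in> R \<or> (y, x) \<in> R)"
proof -
  obtain r :: "'a rel" where r: "Well_order r" "Field r = UNIV"
    using well_ordering by (elim exE conjE)
  have "wf (r - Id)" using r(1) unfolding well_order_on_def by (elim conjE)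
  moreover have "total_on (Field r) r"
    using r(1) unfolding well_order_on_def linear_order_on_def by (elim conjE)
  then have "\<forall>x y. x \<noteq> y \<longrightarrow> (x, y) \<in> r - Id \<or> (y, x) \<in> r - Id"
    unfolding total_on_def r(2) by blast
  ultimately show ?thesis by blast
qed

definition wf_least :: "'a rel \<Rightarrow> ('a \<Rightarrow> bool) \<Rightarrow> 'a" where
  "wf_least R P = (SOME x. P x \<and> (\<forall>y. (y, x) \<in> R \<longrightarrow> \<not> P y))"

lemma wf_least:
  assumes "wf R" "\<exists>x. P x"
  shows "P (wf_least R P)" and "(y, wf_least R P) \<in> R \<Longrightarrow> \<not> P y"
proof -
  obtain x where "P x" using assms(2) ..
  then obtain z where "z \<in> {x. P x}" "\<And>y. (y, z) \<in> R \<Longrightarrow> y \<notin> {x. P x}"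
    using wfE_min[OF assms(1), of x "{x. P x}"] by blast
  then have "\<exists>z. P z \<and> (\<forall>y. (y, z) \<in> R \<longrightarrow> \<not> P y)" by blast
  then have "P (wf_least R P) \<and> (\<forall>y. (y, wf_least R P) \<in> R \<longrightarrow> \<not> P y)"
    unfolding wf_least_def by (rule someI_ex)
  then show "P (wf_least R P)" and "(y, wf_least R P) \<in> R \<Longrightarrow> \<not> P y" by blast+
qed

lemma finite_subset_UN_mono:
  fixes f :: "nat \<Rightarrow> 'a set"
  assumes "mono f" "finite F" "F \<subseteq> (\<Union>n. f n)"
  shows "\<exists>n. F \<subseteq> f n"
  using assms(2,3)
proof (induction F rule: finite_induct)
  case (insert x F)
  then obtain m n where "F \<subseteq> f m" "x \<in> f n" by blast
  then have "insert x F \<subseteq> f (max m n)"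
    using monoD[OF assms(1), of m "max m n"] monoD[OF assms(1), of n "max m n"] by auto
  then show ?case by blast
qed simp

section \<open>Positional determinacy of parity games\<close>

locale parity_game =
  fixes E :: "'v \<Rightarrow> 'v set" and owner :: "'v \<Rightarrow> bool" and pr :: "'v \<Rightarrow> nat"
  assumes finite_E: "finite (E v)"
begin

definition subgame :: "'v set \<Rightarrow> bool" where
  "subgame G \<longleftrightarrow> (\<forall>v\<in>G. E v \<inter> G \<noteq> {})"

definition path_in :: "'v set \<Rightarrow> (nat \<Rightarrow> 'v) \<Rightarrow> bool" where
  "path_in G \<pi> \<longleftrightarrow> (\<forall>k. \<pi> (Suc k) \<in> E (\<pi> k) \<inter> G)"

definition conforms :: "bool \<Rightarrow> ('v \<Rightarrow> 'v) \<Rightarrow> (nat \<Rightarrow> 'v) \<Rightarrow> bool" where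
  "conforms p s \<pi> \<longleftrightarrow> (\<forall>k. owner (\<pi> k) = p \<longrightarrow> \<pi> (Suc k) = s (\<pi> k))"

text \<open>Players are booleans, \<open>True\<close> being Eve.\<close>

definition wins :: "bool \<Rightarrow> (nat \<Rightarrow> 'v) \<Rightarrow> bool" where
  "wins p \<pi> \<longleftrightarrow> parity_acc (\<lambda>k. pr (\<pi> k)) = p"

definition confines :: "'v set \<Rightarrow> bool \<Rightarrow> 'v set \<Rightarrow> ('v \<Rightarrow> 'v) \<Rightarrow> bool" where
  "confines G p D s \<longleftrightarrow> D \<subseteq> G \<and> (\<forall>v\<in>D. owner v = p \<longrightarrow> s v \<in> E v \<inter> D) \<and>
     (\<forall>v\<in>D. owner v \<noteq> p \<longrightarrow> E v \<inter> G \<subseteq> D)"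

definition dominion :: "'v set \<Rightarrow> bool \<Rightarrow> 'v set \<Rightarrow> ('v \<Rightarrow> 'v) \<Rightarrow> bool" where
  "dominion G p D s \<longleftrightarrow> confines G p D s \<and>
     (\<forall>\<pi>. \<pi> 0 \<in> D \<longrightarrow> path_in G \<pi> \<longrightarrow> conforms p s \<pi> \<longrightarrow> wins p \<pi>)"

lemma confinesI:
  assumes "D \<subseteq> G" "\<And>v. v \<in> D \<Longrightarrow> owner v = p \<Longrightarrow> s v \<in> E v \<inter> D"
    "\<And>v. v \<in> D \<Longrightarrow> owner v \<noteq> p \<Longrightarrow> E v \<inter> G \<subseteq> D"
  shows "confines G p D s"
  using assms unfolding confines_def by blast

lemma confinesD:
  assumes "confines G p D s"
  shows "D \<subseteq> G" "\<And>v. v \<in> D \<Longrightarrow> owner v = p \<Longrightarrow> s v \<in> E v \<inter> D"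
    "\<And>v. v \<in> D \<Longrightarrow> owner v \<noteq> p \<Longrightarrow> E v \<inter> G \<subseteq> D"
  using assms unfolding confines_def by blast+

lemma dominionI:
  assumes "confines G p D s"
    and "\<And>\<pi>. \<pi> 0 \<in> D \<Longrightarrow> path_in G \<pi> \<Longrightarrow> conforms p s \<pi> \<Longrightarrow> wins p \<pi>"
  shows "dominion G p D s"
  using assms unfolding dominion_def by blast

lemma dominionD:
  assumes "dominion G p D s"
  shows "confines G p D s" "\<And>\<pi>. \<pi> 0 \<in> D \<Longrightarrow> path_in G \<pi> \<Longrightarrow> conforms p s \<pi> \<Longrightarrow> wins p \<pi>"
  using assms unfolding dominion_def by blast+

lemma dominion_empty: "dominion G p {} s"
  unfolding dominion_def confines_def by auto

lemma path_in_shift: "path_in G \<pi> \<Longrightarrow> path_in G (\<lambda>k. \<pi> (k + n))"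
  unfolding path_in_def by simp

lemma wins_shift: "wins p (\<lambda>k. \<pi> (k + n)) \<longleftrightarrow> wins p \<pi>"
  unfolding wins_def using parity_acc_shift[of "\<lambda>k. pr (\<pi> k)"] by simp

lemma confines_stays:
  assumes "confines G p D s" "path_in G \<pi>" "\<pi> 0 \<in> D"
    and "\<And>k. \<pi> k \<in> D \<Longrightarrow> owner (\<pi> k) = p \<Longrightarrow> \<pi> (Suc k) = s (\<pi> k)"
  shows "\<pi> k \<in> D"
proof (induction k)
  case 0
  show ?case using assms(3) .
next
  case (Suc k)
  show ?case
  proof (cases "owner (\<pi> k) = p")
    case True
    then show ?thesis using Suc assms(4) confinesD(2)[OF assms(1)] by auto
  next
    case False
    then show ?thesis
      using Suc assms(2) confinesD(3)[OF assms(1)] unfolding path_in_def by blast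
  qed
qed

lemma dominion_wins_from:
  assumes "dominion G p D s" "path_in G \<pi>" "\<pi> n \<in> D"
    and "\<And>k. n \<le> k \<Longrightarrow> \<pi> k \<in> D \<Longrightarrow> owner (\<pi> k) = p \<Longrightarrow> \<pi> (Suc k) = s (\<pi> k)"
  shows "wins p \<pi>"
proof -
  let ?\<rho> = "\<lambda>k. \<pi> (k + n)"
  have path: "path_in G ?\<rho>" using assms(2) by (rule path_in_shift)
  have "?\<rho> k \<in> D" for k
    using confines_stays[OF dominionD(1)[OF assms(1)] path] assms(3,4) by simp
  then have "conforms p s ?\<rho>"
    unfolding conforms_def using assms(4) by simp
  then have "wins p ?\<rho>"
    using dominionD(2)[OF assms(1)] path assms(3) by simp
  then show ?thesis by (simp add: wins_shift)
qed

primrec attr_upto :: "'v set \<Rightarrow> bool \<Rightarrow> 'v set \<Rightarrow> nat \<Rightarrow> 'v set" where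
  "attr_upto G p T 0 = T \<inter> G"
| "attr_upto G p T (Suc n) = attr_upto G p T n \<union> {v \<in> G.
     (owner v = p \<and> E v \<inter> attr_upto G p T n \<noteq> {}) \<or> (owner v \<noteq> p \<and> E v \<inter> G \<subseteq> attr_upto G p T n)}"

definition attr :: "'v set \<Rightarrow> bool \<Rightarrow> 'v set \<Rightarrow> 'v set" where
  "attr G p T = (\<Union>n. attr_upto G p T n)"

definition attr_rank :: "'v set \<Rightarrow> bool \<Rightarrow> 'v set \<Rightarrow> 'v \<Rightarrow> nat" where
  "attr_rank G p T v = (LEAST n. v \<in> attr_upto G p T n)"

definition attr_strategy :: "'v set \<Rightarrow> bool \<Rightarrow> 'v set \<Rightarrow> 'v \<Rightarrow> 'v" where
  "attr_strategy G p T v = (SOME w. w \<in> E v \<inter> attr_upto G p T (attr_rank G p T v - 1))"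

lemma attr_upto_mono: "m \<le> n \<Longrightarrow> attr_upto G p T m \<subseteq> attr_upto G p T n"
  by (induction n) (auto simp: le_Suc_eq)

lemma attr_subset: "attr G p T \<subseteq> G"
proof -
  have "attr_upto G p T n \<subseteq> G" for n by (induction n) auto
  then show ?thesis unfolding attr_def by blast
qed

lemma attr_base: "T \<inter> G \<subseteq> attr G p T"
  unfolding attr_def using attr_upto.simps(1) by blast

lemma attr_rank_mem: "v \<in> attr G p T \<Longrightarrow> v \<in> attr_upto G p T (attr_rank G p T v)"
  unfolding attr_def attr_rank_def by (auto intro: LeastI)

lemma attr_rank_le: "v \<in> attr_upto G p T n \<Longrightarrow> attr_rank G p T v \<le> n"
  unfolding attr_rank_def by (rule Least_le)

lemma attr_step:
  assumes "v \<in> attr G p T - T"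
  shows "owner v = p \<Longrightarrow> attr_strategy G p T v \<in> E v \<inter> attr G p T \<and>
           attr_rank G p T (attr_strategy G p T v) < attr_rank G p T v"
    and "owner v \<noteq> p \<Longrightarrow> w \<in> E v \<inter> G \<Longrightarrow>
           w \<in> attr G p T \<and> attr_rank G p T w < attr_rank G p T v"
proof -
  obtain m where m: "attr_rank G p T v = Suc m"
    using attr_rank_mem[of v G p T] assms by (cases "attr_rank G p T v") auto
  then have "v \<notin> attr_upto G p T m"
    using attr_rank_le[of v G p T m] by auto
  then have v: "(owner v = p \<and> E v \<inter> attr_upto G p T m \<noteq> {}) \<or>
      (owner v \<noteq> p \<and> E v \<inter> G \<subseteq> attr_upto G p T m)"
    using attr_rank_mem[of v G p T] assms m by auto
  have below: "w \<in> attr G p T \<and> attr_rank G p T w < attr_rank G p T v"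
    if "w \<in> attr_upto G p T m" for w
    using that attr_rank_le[OF that] m unfolding attr_def by auto
  show "attr_strategy G p T v \<in> E v \<inter> attr G p T \<and>
      attr_rank G p T (attr_strategy G p T v) < attr_rank G p T v" if "owner v = p"
  proof -
    have "\<exists>w. w \<in> E v \<inter> attr_upto G p T m" using v that by blast
    then have "attr_strategy G p T v \<in> E v \<inter> attr_upto G p T m"
      unfolding attr_strategy_def m diff_Suc_1 by (rule someI_ex)
    then show ?thesis using below by blast
  qed
  show "w \<in> attr G p T \<and> attr_rank G p T w < attr_rank G p T v"
    if "owner v \<noteq> p" "w \<in> E v \<inter> G"
    using v that below by blast
qed

lemma attr_complement_owner:
  assumes "v \<in> G - attr G p T" "owner v = p"
  shows "E v \<inter> G \<subseteq> G - attr G p T"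
proof
  fix w assume w: "w \<in> E v \<inter> G"
  show "w \<in> G - attr G p T"
  proof (rule ccontr)
    assume "w \<notin> G - attr G p T"
    then obtain n where "w \<in> attr_upto G p T n" using w unfolding attr_def by blast
    then have "v \<in> attr_upto G p T (Suc n)" using assms w by auto
    then show False using assms(1) unfolding attr_def by blast
  qed
qed

lemma attr_complement_opponent:
  assumes "v \<in> G - attr G p T" "owner v \<noteq> p"
  shows "E v \<inter> (G - attr G p T) \<noteq> {}"
proof
  assume "E v \<inter> (G - attr G p T) = {}"
  then have "E v \<inter> G \<subseteq> (\<Union>n. attr_upto G p T n)" unfolding attr_def by blast
  then obtain n where "E v \<inter> G \<subseteq> attr_upto G p T n"
    using finite_subset_UN_mono[of "attr_upto G p T"] finite_E attr_upto_mono
    by (metis finite_Int monoI)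
  then have "v \<in> attr_upto G p T (Suc n)" using assms by auto
  then show False using assms(1) unfolding attr_def by blast
qed

lemma subgame_Diff_attr:
  assumes "subgame G"
  shows "subgame (G - attr G p T)"
  unfolding subgame_def
proof
  fix v assume v: "v \<in> G - attr G p T"
  show "E v \<inter> (G - attr G p T) \<noteq> {}"
  proof (cases "owner v = p")
    case True
    with v assms attr_complement_owner[OF v] show ?thesis unfolding subgame_def by blast
  next
    case False
    with attr_complement_opponent[OF v] show ?thesis by blast
  qed
qed

lemma attr_reaches_target:
  assumes "path_in G \<pi>" "\<pi> 0 \<in> attr G p T"
    and "\<And>k. \<pi> k \<in> attr G p T - T \<Longrightarrow> owner (\<pi> k) = p \<Longrightarrow> \<pi> (Suc k) = attr_strategy G p T (\<pi> k)"
  shows "\<exists>k. \<pi> k \<in> T"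
proof (rule ccontr)
  assume "\<nexists>k. \<pi> k \<in> T"
  then have descent: "\<pi> k \<in> attr G p T \<and> attr_rank G p T (\<pi> k) + k \<le> attr_rank G p T (\<pi> 0)" for k
  proof (induction k)
    case (Suc k)
    then have "\<pi> k \<in> attr G p T - T" by blast
    moreover have "\<pi> (Suc k) \<in> E (\<pi> k) \<inter> G" using assms(1) unfolding path_in_def by blast
    ultimately have "\<pi> (Suc k) \<in> attr G p T \<and> attr_rank G p T (\<pi> (Suc k)) < attr_rank G p T (\<pi> k)"
      using attr_step assms(3) by (cases "owner (\<pi> k) = p") auto
    with Suc show ?case by auto
  qed (use assms(2) in simp)
  from descent[of "Suc (attr_rank G p T (\<pi> 0))"] show False by simp
qed

lemma attr_reaches_target_infinitely_often:
  assumes "path_in G \<pi>" "INFM k. \<pi> k \<in> attr G p T"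
    and "\<And>k. \<pi> k \<in> attr G p T - T \<Longrightarrow> owner (\<pi> k) = p \<Longrightarrow> \<pi> (Suc k) = attr_strategy G p T (\<pi> k)"
  shows "INFM k. \<pi> k \<in> T"
  unfolding INFM_nat_le
proof
  fix m
  obtain n where n: "n \<ge> m" "\<pi> n \<in> attr G p T" using assms(2) unfolding INFM_nat_le by blast
  have "\<exists>j. \<pi> (j + n) \<in> T"
    by (rule attr_reaches_target[OF path_in_shift[OF assms(1)]]) (use n assms(3) in auto)
  then show "\<exists>k\<ge>m. \<pi> k \<in> T" using n(1) le_add2 order_trans by blast
qed

lemma attr_dominion:
  assumes dom: "dominion G p D s"
  shows "dominion G p (attr G p D) (\<lambda>v. if v \<in> D then s v else attr_strategy G p D v)"
    (is "dominion G p ?A ?s")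
proof (rule dominionI)
  have DA: "D \<subseteq> ?A" using attr_base confinesD(1)[OF dominionD(1)[OF dom]] by blast
  show "confines G p ?A ?s"
  proof (rule confinesI)
    show "?A \<subseteq> G" by (rule attr_subset)
  next
    fix v assume "v \<in> ?A" "owner v = p"
    then show "?s v \<in> E v \<inter> ?A"
      using attr_step(1)[of v] confinesD(2)[OF dominionD(1)[OF dom]] DA by (cases "v \<in> D") auto
  next
    fix v assume "v \<in> ?A" "owner v \<noteq> p"
    then show "E v \<inter> G \<subseteq> ?A"
      using attr_step(2)[of v] confinesD(3)[OF dominionD(1)[OF dom]] DA by (cases "v \<in> D") blast+
  qed
next
  fix \<pi> assume \<pi>: "\<pi> 0 \<in> ?A" "path_in G \<pi>" "conforms p ?s \<pi>"
  then obtain n where "\<pi> n \<in> D"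
    using attr_reaches_target[of G \<pi> p D] unfolding conforms_def by auto
  then show "wins p \<pi>"
    by (rule dominion_wins_from[OF dom \<pi>(2)]) (use \<pi>(3) in \<open>auto simp: conforms_def\<close>)
qed

text \<open>Each vertex follows the strategy of the least dominion containing it; along a play
  this index never increases, so it eventually stabilises.\<close>

lemma dominion_UN:
  assumes dom: "\<And>x. x \<in> I \<Longrightarrow> dominion G p (D x) (S x)" and "wf R"
    and total: "\<And>x y. x \<noteq> y \<Longrightarrow> (x, y) \<in> R \<or> (y, x) \<in> R"
  shows "dominion G p (\<Union>x\<in>I. D x) (\<lambda>v. S (wf_least R (\<lambda>x. x \<in> I \<and> v \<in> D x)) v)"
proof -
  let ?U = "\<Union>x\<in>I. D x"
  define idx where "idx v = wf_least R (\<lambda>x. x \<in> I \<and> v \<in> D x)" for v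
  have ex: "\<exists>x. x \<in> I \<and> v \<in> D x" if "v \<in> ?U" for v using that by blast
  have idx: "idx v \<in> I" "v \<in> D (idx v)" if "v \<in> ?U" for v
    using wf_least(1)[OF \<open>wf R\<close> ex[OF that]] unfolding idx_def by blast+
  have idx_min: "\<not> (y \<in> I \<and> v \<in> D y)" if "v \<in> ?U" "(y, idx v) \<in> R" for v y
    using wf_least(2)[OF \<open>wf R\<close> ex[OF that(1)] that(2)[unfolded idx_def]] .
  have conf_idx: "confines G p (D (idx v)) (S (idx v))" if "v \<in> ?U" for v
    using dominionD(1)[OF dom[OF idx(1)[OF that]]] .
  have DU: "D (idx v) \<subseteq> ?U" if "v \<in> ?U" for v using idx(1)[OF that] by blast
  have step: "w \<in> D (idx v)"
    if v: "v \<in> ?U" and w: "w \<in> E v \<inter> G" and follow: "owner v = p \<Longrightarrow> w = S (idx v) v" for v w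
    using confinesD(2,3)[OF conf_idx[OF v] idx(2)[OF v]] w follow by (cases "owner v = p") auto
  have conf: "confines G p ?U (\<lambda>v. S (idx v) v)"
  proof (rule confinesI)
    show "?U \<subseteq> G" using confinesD(1)[OF dominionD(1)[OF dom]] by blast
  next
    fix v assume "v \<in> ?U" "owner v = p"
    then show "S (idx v) v \<in> E v \<inter> ?U"
      using confinesD(2)[OF conf_idx idx(2)] DU by blast
  next
    fix v assume "v \<in> ?U" "owner v \<noteq> p"
    then show "E v \<inter> G \<subseteq> ?U" using step DU by blast
  qed
  have wins: "wins p \<pi>" if \<pi>: "\<pi> 0 \<in> ?U" "path_in G \<pi>" "conforms p (\<lambda>v. S (idx v) v) \<pi>" for \<pi>
  proof -
    have inU: "\<pi> k \<in> ?U" for k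
      using confines_stays[OF conf \<pi>(2,1)] \<pi>(3) unfolding conforms_def by blast
    have "\<pi> (Suc k) \<in> D (idx (\<pi> k))" for k
      using step[OF inU[of k]] \<pi>(2,3) unfolding path_in_def conforms_def by blast
    then have "(idx (\<pi> k), idx (\<pi> (Suc k))) \<notin> R" for k
      using idx_min[OF inU[of "Suc k"]] idx(1)[OF inU[of k]] by blast
    then have "idx (\<pi> (Suc k)) = idx (\<pi> k) \<or> (idx (\<pi> (Suc k)), idx (\<pi> k)) \<in> R" for k
      using total by blast
    then obtain N where N: "\<And>k. k \<ge> N \<Longrightarrow> idx (\<pi> k) = idx (\<pi> N)"
      using wf_eventually_constant[OF \<open>wf R\<close>, of "\<lambda>k. idx (\<pi> k)"] by blast
    show "wins p \<pi>"
    proof (rule dominion_wins_from[OF dom[OF idx(1)[OF inU[of N]]] \<pi>(2) idx(2)[OF inU[of N]]])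
      fix k assume "N \<le> k" "owner (\<pi> k) = p"
      then have "\<pi> (Suc k) = S (idx (\<pi> k)) (\<pi> k)"
        using \<pi>(3) unfolding conforms_def by blast
      then show "\<pi> (Suc k) = S (idx (\<pi> N)) (\<pi> k)"
        using N[OF \<open>N \<le> k\<close>] by simp
    qed
  qed
  have "dominion G p ?U (\<lambda>v. S (idx v) v)"
    using dominionI[OF conf wins] .
  then show ?thesis unfolding idx_def .
qed

lemma dominion_Union: "\<exists>s. dominion G p (\<Union>{D. \<exists>s. dominion G p D s}) s"
proof -
  let ?I = "{(D, s). dominion G p D s}"
  from exists_total_wf obtain R :: "('v set \<times> ('v \<Rightarrow> 'v)) rel"
    where R: "wf R \<and> (\<forall>x y. x \<noteq> y \<longrightarrow> (x, y) \<in> R \<or> (y, x) \<in> R)" ..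
  moreover have "\<And>x. x \<in> ?I \<Longrightarrow> dominion G p (fst x) (snd x)" by auto
  ultimately have "dominion G p (\<Union>x\<in>?I. fst x) (\<lambda>v. snd (wf_least R (\<lambda>x. x \<in> ?I \<and> v \<in> fst x)) v)"
    using dominion_UN[of ?I G p fst snd R] by blast
  moreover have "(\<Union>x\<in>?I. fst x) = \<Union>{D. \<exists>s. dominion G p D s}" by force
  ultimately show ?thesis by auto
qed

lemma dominion_join:
  assumes d1: "dominion G p D1 s1" and d2: "dominion G2 p D2 s2" and "G2 \<subseteq> G"
    and escape: "\<And>v. v \<in> D2 \<Longrightarrow> owner v \<noteq> p \<Longrightarrow> E v \<inter> G \<subseteq> D1 \<union> D2"
  shows "dominion G p (D1 \<union> D2) (\<lambda>v. if v \<in> D1 then s1 v else s2 v)" (is "dominion G p ?D ?s")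
proof -
  note c1 = dominionD(1)[OF d1] and c2 = dominionD(1)[OF d2]
  show ?thesis
  proof (rule dominionI)
  show "confines G p ?D ?s"
  proof (rule confinesI)
    show "?D \<subseteq> G" using confinesD(1)[OF c1] confinesD(1)[OF c2] \<open>G2 \<subseteq> G\<close> by blast
  next
    fix v assume "v \<in> ?D" "owner v = p"
    then show "?s v \<in> E v \<inter> ?D" using confinesD(2)[OF c1] confinesD(2)[OF c2] by auto
  next
    fix v assume "v \<in> ?D" "owner v \<noteq> p"
    then show "E v \<inter> G \<subseteq> ?D" using confinesD(3)[OF c1] escape by blast
  qed
next
  fix \<pi> assume \<pi>: "\<pi> 0 \<in> ?D" "path_in G \<pi>" "conforms p ?s \<pi>"
  show "wins p \<pi>"
  proof (cases "\<exists>n. \<pi> n \<in> D1")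
    case True
    then obtain n where "\<pi> n \<in> D1" ..
    then show ?thesis
      by (rule dominion_wins_from[OF d1 \<pi>(2)]) (use \<pi>(3) in \<open>auto simp: conforms_def\<close>)
  next
    case False
    have in2: "\<pi> k \<in> D2" for k
    proof (induction k)
      case 0
      show ?case using \<pi>(1) False by blast
    next
      case (Suc k)
      show ?case
      proof (cases "owner (\<pi> k) = p")
        case True
        then have "\<pi> (Suc k) = s2 (\<pi> k)" using \<pi>(3) False unfolding conforms_def by auto
        then show ?thesis using confinesD(2)[OF c2 Suc True] by simp
      next
        case owner: False
        have "\<pi> (Suc k) \<in> E (\<pi> k) \<inter> G" using \<pi>(2) unfolding path_in_def by blast
        then show ?thesis using escape[OF Suc owner] False by blast
      qed
    qed
    have path2: "path_in G2 \<pi>"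
      using \<pi>(2) in2 confinesD(1)[OF c2] unfolding path_in_def by blast
    show ?thesis
    proof (rule dominion_wins_from[OF d2 path2 in2[of 0]])
      fix k assume "owner (\<pi> k) = p"
      then show "\<pi> (Suc k) = s2 (\<pi> k)" using \<pi>(3) False unfolding conforms_def by auto
    qed
  qed
  qed
qed

definition attr_extension :: "'v set \<Rightarrow> bool \<Rightarrow> 'v set \<Rightarrow> ('v \<Rightarrow> 'v) \<Rightarrow> 'v \<Rightarrow> 'v" where
  "attr_extension G p T s v = (if v \<in> G - attr G p T then s v
     else if v \<in> T then (SOME w. w \<in> E v \<inter> G) else attr_strategy G p T v)"

lemma attr_extension_move:
  assumes "subgame G" "confines (G - attr G p T) p (G - attr G p T) s" "v \<in> G" "owner v = p"
  shows "attr_extension G p T s v \<in> E v \<inter> G"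
proof -
  consider "v \<in> G - attr G p T" | "v \<in> T" | "v \<in> attr G p T - T" using assms(3) by blast
  then show ?thesis
  proof cases
    case 1
    then show ?thesis using confinesD(2)[OF assms(2) _ assms(4)] unfolding attr_extension_def by auto
  next
    case 2
    have "\<exists>w. w \<in> E v \<inter> G" using assms(1,3) unfolding subgame_def by blast
    then have "(SOME w. w \<in> E v \<inter> G) \<in> E v \<inter> G" by (rule someI_ex)
    moreover have "v \<notin> G - attr G p T" using 2 assms(3) attr_base by blast
    ultimately show ?thesis using 2 assms(3) unfolding attr_extension_def by simp
  next
    case 3
    then show ?thesis
      using attr_step(1)[OF 3 assms(4)] attr_subset unfolding attr_extension_def by auto
  qed
qed

text \<open>The inductive step of Zielonka's recursion: a play visiting the attractor of the
  top-priority vertices infinitely often sees \<open>d\<close> infinitely often, and every other play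
  ends in the subgame won by \<open>p\<close>.\<close>

lemma dominion_top_priority:
  fixes G' :: "'v set" and d :: nat
  defines "N \<equiv> {v \<in> G'. pr v = d}"
  assumes "G' \<subseteq> G" "subgame G'"
    and trap: "\<And>v. v \<in> G' \<Longrightarrow> owner v \<noteq> p \<Longrightarrow> E v \<inter> G \<subseteq> G'"
    and top: "\<And>v. v \<in> G' \<Longrightarrow> pr v \<le> d" and "even d = p"
    and rest: "dominion (G' - attr G' p N) p (G' - attr G' p N) s"
  shows "dominion G p G' (attr_extension G' p N s)"
proof -
  let ?X = "attr G' p N" and ?s' = "attr_extension G' p N s"
  have conf: "confines G p G' ?s'"
    by (rule confinesI)
      (use \<open>G' \<subseteq> G\<close> attr_extension_move[OF \<open>subgame G'\<close> dominionD(1)[OF rest]] trap in auto)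
  show ?thesis
  proof (rule dominionI[OF conf])
    fix \<pi> assume \<pi>: "\<pi> 0 \<in> G'" "path_in G \<pi>" "conforms p ?s' \<pi>"
    have inG': "\<pi> k \<in> G'" for k
      using confines_stays[OF conf \<pi>(2,1)] \<pi>(3) unfolding conforms_def by blast
    have path': "path_in G' \<pi>"
      using \<pi>(2) inG' unfolding path_in_def by blast
    show "wins p \<pi>"
    proof (cases "INFM k. \<pi> k \<in> ?X")
      case True
      have "INFM k. \<pi> k \<in> N"
      proof (rule attr_reaches_target_infinitely_often[OF path' True])
        fix k assume "\<pi> k \<in> ?X - N" "owner (\<pi> k) = p"
        then show "\<pi> (Suc k) = attr_strategy G' p N (\<pi> k)"
          using \<pi>(3) unfolding conforms_def attr_extension_def by simp
      qed
      then have "INFM k. pr (\<pi> k) = d"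
        unfolding N_def by (auto elim: INFM_mono)
      then show ?thesis
        unfolding wins_def using parity_acc_top_priority[OF top[OF inG']] \<open>even d = p\<close> by simp
    next
      case False
      then obtain m where m: "\<And>k. k \<ge> m \<Longrightarrow> \<pi> k \<notin> ?X"
        unfolding not_INFM MOST_nat_le by blast
      let ?\<rho> = "\<lambda>k. \<pi> (k + m)"
      have in_rest: "?\<rho> k \<in> G' - ?X" for k using inG' m by simp
      have "path_in (G' - ?X) ?\<rho>"
        unfolding path_in_def
      proof
        fix k show "?\<rho> (Suc k) \<in> E (?\<rho> k) \<inter> (G' - ?X)"
          using path' in_rest[of "Suc k"] unfolding path_in_def by simp
      qed
      moreover have "conforms p s ?\<rho>"
        using \<pi>(3) in_rest unfolding conforms_def attr_extension_def by simp
      ultimately have "wins p ?\<rho>"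
        using dominionD(2)[OF rest] in_rest[of 0] by simp
      then show ?thesis by (simp add: wins_shift)
    qed
  qed
qed

lemma attr_Union_dominions:
  "attr G p (\<Union>{D. \<exists>s. dominion G p D s}) = \<Union>{D. \<exists>s. dominion G p D s}"
proof -
  define U where "U = \<Union>{D. \<exists>s. dominion G p D s}"
  obtain sU where dU: "dominion G p U sU"
    using dominion_Union[of G p, folded U_def] by (elim exE)
  have "attr G p U \<in> {D. \<exists>s. dominion G p D s}" using attr_dominion[OF dU] by blast
  then have "attr G p U \<subseteq> U" unfolding U_def by (rule Union_upper)
  moreover have "U \<subseteq> attr G p U"
    using attr_base[of U G] confinesD(1)[OF dominionD(1)[OF dU]] by blast
  ultimately show ?thesis unfolding U_def[symmetric] by (rule antisym)
qed

text \<open>Zielonka's recursion, with the union of all opponent dominions in place of the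
  opponent's attractor, so that it also works for infinite (finitely branching) arenas.\<close>

lemma dominion_complement_of_opponent:
  fixes G :: "'v set" and p :: bool and d :: nat
  defines "U \<equiv> \<Union>{D. \<exists>s. dominion G (\<not> p) D s}"
  assumes "subgame G" and top: "\<And>v. v \<in> G \<Longrightarrow> pr v \<le> d" and "even d = p"
    and IH: "\<And>G''. subgame G'' \<Longrightarrow> (\<And>v. v \<in> G'' \<Longrightarrow> pr v < d) \<Longrightarrow>
      \<exists>W s W' s'. G'' \<subseteq> W \<union> W' \<and> dominion G'' p W s \<and> dominion G'' (\<not> p) W' s'"
  shows "\<exists>s. dominion G p (G - U) s"
proof -
  have U_max: "D \<subseteq> U" if "dominion G (\<not> p) D s" for D s
    unfolding U_def by (rule Union_upper) (use that in blast)
  obtain sU where dU: "dominion G (\<not> p) U sU"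
    using dominion_Union[of G "\<not> p", folded U_def] by (elim exE)
  have U_attr: "attr G (\<not> p) U = U" unfolding U_def by (rule attr_Union_dominions)
  define G' where "G' = G - U"
  have sub': "subgame G'"
    using subgame_Diff_attr[OF \<open>subgame G\<close>, of "\<not> p" U] unfolding U_attr G'_def .
  have trap': "E v \<inter> G \<subseteq> G'" if "v \<in> G'" "owner v \<noteq> p" for v
    using attr_complement_owner[of v G "\<not> p" U] that unfolding U_attr G'_def by simp
  define N where "N = {v \<in> G'. pr v = d}"
  define G'' where "G'' = G' - attr G' p N"
  have sub'': "subgame G''"
    using subgame_Diff_attr[OF sub'] unfolding G''_def .
  have "pr v < d" if "v \<in> G''" for v
  proof -
    have "v \<notin> N" using that attr_base[of N G' p] unfolding G''_def N_def by blast
    then show ?thesis using that top unfolding G''_def G'_def N_def by fastforce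
  qed
  then obtain Ws ss Wn sn where
    cover: "G'' \<subseteq> Ws \<union> Wn" and dWs: "dominion G'' p Ws ss" and dWn: "dominion G'' (\<not> p) Wn sn"
    using IH[OF sub''] by blast
  have "G'' \<subseteq> G" unfolding G''_def G'_def by blast
  then have "dominion G (\<not> p) (U \<union> Wn) (\<lambda>v. if v \<in> U then sU v else sn v)"
  proof (rule dominion_join[OF dU dWn])
    fix v assume v: "v \<in> Wn" "owner v \<noteq> (\<not> p)"
    have "v \<in> G''" using confinesD(1)[OF dominionD(1)[OF dWn]] v(1) by blast
    then have "E v \<inter> G' \<subseteq> G''"
      using attr_complement_owner[of v G' p N] v(2) unfolding G''_def by simp
    then show "E v \<inter> G \<subseteq> U \<union> Wn"
      using confinesD(3)[OF dominionD(1)[OF dWn] v] unfolding G'_def by blast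
  qed
  then have "Wn \<subseteq> U" by (rule U_max[THEN subset_trans[OF Un_upper2]])
  moreover have "Wn \<subseteq> G''" using confinesD(1)[OF dominionD(1)[OF dWn]] .
  ultimately have "Ws = G''"
    using cover confinesD(1)[OF dominionD(1)[OF dWs]] unfolding G''_def G'_def by blast
  then have "dominion G p G' (attr_extension G' p N ss)"
    using dominion_top_priority[where G' = G' and d = d and G = G and p = p and s = ss] dWs sub' trap' top \<open>even d = p\<close>
    unfolding G''_def N_def G'_def by fastforce
  then show ?thesis unfolding G'_def by blast
qed

theorem positional_determinacy:
  assumes "subgame G" "\<And>v. v \<in> G \<Longrightarrow> pr v < d"
  shows "\<exists>W s W' s'. G \<subseteq> W \<union> W' \<and> dominion G p W s \<and> dominion G (\<not> p) W' s'"
  using assms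
proof (induction d arbitrary: G p)
  case 0
  then have "G \<subseteq> {} \<union> {}" by auto
  then show ?case using dominion_empty by blast
next
  case (Suc d)
  define \<sigma> where "\<sigma> = even d"
  define U where "U = \<Union>{D. \<exists>s. dominion G (\<not> \<sigma>) D s}"
  obtain sU where dU: "dominion G (\<not> \<sigma>) U sU"
    using dominion_Union[of G "\<not> \<sigma>", folded U_def] by (elim exE)
  have top: "\<And>v. v \<in> G \<Longrightarrow> pr v \<le> d" using Suc.prems(2) by (simp add: less_Suc_eq_le)
  obtain s' where dG': "dominion G \<sigma> (G - U) s'"
    using dominion_complement_of_opponent[OF Suc.prems(1) top \<sigma>_def[symmetric] Suc.IH, folded U_def]
    by blast
  have "G \<subseteq> (G - U) \<union> U" by blast
  then show ?case
  proof (cases "p = \<sigma>")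
    case True
    then show ?thesis using \<open>G \<subseteq> (G - U) \<union> U\<close> dG' dU by blast
  next
    case False
    then have "p = (\<not> \<sigma>)" "(\<not> p) = \<sigma>" by auto
    then show ?thesis using \<open>G \<subseteq> (G - U) \<union> U\<close> dG' dU
      by (intro exI[of _ U] exI[of _ sU] exI[of _ "G - U"] exI[of _ s']) auto
  qed
qed

end

lemma finite_atoms: "finite (atoms \<phi>)"
  by (induction \<phi>) auto

lemma reach_subset_atoms: "reach s \<phi> \<subseteq> atoms \<phi>"
  by (induction \<phi>) auto

lemma reach_nonempty: "reach s \<phi> \<noteq> {}"
  by (induction \<phi>) auto

lemma descend_in_atoms: "descend e u p \<phi> \<in> atoms \<phi>"
  by (induction \<phi> arbitrary: p) auto

lemma descend_cong:
  assumes "\<And>r. u (p @ r) = u' (p @ r)"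
  shows "descend e u p \<phi> = descend e u' p \<phi>"
  using assms
proof (induction \<phi> arbitrary: p)
  case (And f g)
  have "descend e u (p @ [b]) f = descend e u' (p @ [b]) f"
    and "descend e u (p @ [b]) g = descend e u' (p @ [b]) g" for b
    using And.IH And.prems[of "b # _"] by simp_all
  moreover have "u p = u' p" using And.prems[of "[]"] by simp
  ultimately show ?case by simp
next
  case (Or f g)
  have "descend e u (p @ [b]) f = descend e u' (p @ [b]) f"
    and "descend e u (p @ [b]) g = descend e u' (p @ [b]) g" for b
    using Or.IH Or.prems[of "b # _"] by simp_all
  then show ?case by simp
qed simp

lemma descend_And_override:
  "descend e (u(p := b)) p (And f g) = descend e u (p @ [b]) (if b then g else f)"
proof -
  have "descend e (u(p := b)) (p @ [b]) h = descend e u (p @ [b]) h" for h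
    by (rule descend_cong) simp
  then show ?thesis by (cases b) simp_all
qed

text \<open>The local strategies of boxes choose a disjunct per subformula, not per position.
  The position-independent choice below still keeps Eve inside any set of atoms she can
  force with a position-dependent one.\<close>

fun forces :: "'q set \<Rightarrow> 'q pbf \<Rightarrow> bool" where
  "forces T (Atom q) \<longleftrightarrow> q \<in> T"
| "forces T (And f g) \<longleftrightarrow> forces T f \<and> forces T g"
| "forces T (Or f g) \<longleftrightarrow> forces T f \<or> forces T g"

definition forcing_choice :: "'q set \<Rightarrow> 'q pbf \<Rightarrow> bool" where
  "forcing_choice T \<psi> = (case \<psi> of Or f g \<Rightarrow> \<not> forces T f | _ \<Rightarrow> False)"

lemma reach_forcing_choice: "forces T \<phi> \<Longrightarrow> reach (forcing_choice T) \<phi> \<subseteq> T"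
  by (induction \<phi>) (auto simp: forcing_choice_def)

lemma forces_if_descend_in:
  assumes "\<And>u. descend e u p \<phi> \<in> T"
  shows "forces T \<phi>"
  using assms
proof (induction \<phi> arbitrary: p)
  case (And f g)
  have branch: "descend e u (p @ [b]) (if b then g else f) \<in> T" for u b
    using And.prems[of "u(p := b)"] unfolding descend_And_override .
  have "forces T f" using And.IH(1)[of "p @ [False]"] branch[of _ False] by simp
  moreover have "forces T g" using And.IH(2)[of "p @ [True]"] branch[of _ True] by simp
  ultimately show ?case by simp
next
  case (Or f g)
  then show ?case by (cases "e p") fastforce+
qed simp

lemma commitment_within_descents:
  "\<exists>s. reach s \<phi> \<subseteq> {descend e u [] \<phi> | u. True}"
proof -
  have "forces {descend e u [] \<phi> | u. True} \<phi>"
    by (rule forces_if_descend_in) blast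
  then show ?thesis using reach_forcing_choice by blast
qed

fun child :: "bool \<Rightarrow> 'q pbf \<Rightarrow> 'q pbf" where
  "child b (Atom q) = Atom q"
| "child b (And f g) = (if b then g else f)"
| "child b (Or f g) = (if b then g else f)"

fun subformula_at :: "'q pbf \<Rightarrow> bool list \<Rightarrow> 'q pbf" where
  "subformula_at \<phi> [] = \<phi>"
| "subformula_at \<phi> (b # bs) = subformula_at (child b \<phi>) bs"

lemma subformula_at_snoc: "subformula_at \<phi> (p @ [b]) = child b (subformula_at \<phi> p)"
  by (induction p arbitrary: \<phi>) auto

lemma descend_local_strategy:
  assumes "subformula_at \<phi>0 p = \<phi>"
  shows "descend (\<lambda>p. s (subformula_at \<phi>0 p)) u p \<phi> \<in> reach s \<phi>"
  using assms
proof (induction \<phi> arbitrary: p)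
  case (And f g)
  then show ?case by (auto simp: subformula_at_snoc)
next
  case (Or f g)
  then show ?case by (auto simp: subformula_at_snoc)
qed simp

lemma init_in_states: "wf_apa A \<Longrightarrow> init A \<in> states A"
  unfolding wf_apa_def by blast

lemma atoms_trans_subset_states:
  "wf_apa A \<Longrightarrow> q \<in> states A \<Longrightarrow> a \<in> alph A \<Longrightarrow> atoms (trans A q a) \<subseteq> states A"
  unfolding wf_apa_def by blast

definition last_state :: "('q, 'a) apa \<Rightarrow> ('q, 'a) hist \<Rightarrow> 'q" where
  "last_state A h = (if h = [] then init A else snd (snd (last h)))"

lemma play_Suc_eq:
  "play A ltr e u (Suc n) =
    (let h = fst (play A ltr e u n); q = snd (play A ltr e u n); a = ltr h;
         q' = descend (e h a) (u h a) [] (trans A q a) in (h @ [(q, a, q')], q'))"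
  by (cases "play A ltr e u n") (simp add: Let_def)

lemma length_play: "length (fst (play A ltr e u n)) = n"
  by (induction n) (simp_all add: play_Suc_eq Let_def del: play.simps(2))

lemma play_last_state: "snd (play A ltr e u n) = last_state A (fst (play A ltr e u n))"
  by (cases n) (simp_all add: play_Suc_eq Let_def last_state_def del: play.simps(2))

lemma play_snd_Suc:
  "snd (play A ltr e u (Suc n)) =
    (let h = fst (play A ltr e u n); a = ltr h in descend (e h a) (u h a) [] (trans A (snd (play A ltr e u n)) a))"
  by (simp add: play_Suc_eq Let_def del: play.simps(2))

lemma play_trans_eq:
  "play_trans A ltr e u n = (snd (play A ltr e u n), ltr (fst (play A ltr e u n)), snd (play A ltr e u (Suc n)))"
  unfolding play_trans_def using length_play[of A ltr e u n]
  by (simp add: play_Suc_eq Let_def nth_append del: play.simps(2))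

lemma play_fst_Suc: "fst (play A ltr e u (Suc n)) = fst (play A ltr e u n) @ [play_trans A ltr e u n]"
  by (simp add: play_trans_eq play_Suc_eq Let_def del: play.simps(2))

lemma play_fst_eq_map: "fst (play A ltr e u n) = map (play_trans A ltr e u) [0..<n]"
  by (induction n) (simp_all add: play_fst_Suc del: play.simps(2))

lemma play_in_states:
  assumes "wf_apa A" "\<And>h. ltr h \<in> alph A"
  shows "snd (play A ltr e u n) \<in> states A"
proof (induction n)
  case 0
  then show ?case using init_in_states[OF assms(1)] by simp
next
  case (Suc n)
  then show ?case
    using descend_in_atoms atoms_trans_subset_states[OF assms(1) Suc assms(2)]
    unfolding play_snd_Suc Let_def by blast
qed

section \<open>Box words from the model-checking game\<close>

lemma box_chain:
  assumes "\<And>i. snd (snd (t i)) = fst (t (Suc i))" and "\<And>i. t i \<in> box A (w i) (\<sigma> i)"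
  shows "t n = (fst (t n), w n, fst (t (Suc n)))" and "fst (t n) \<in> states A"
    and "fst (t (Suc n)) \<in> reach (\<sigma> n (fst (t n))) (trans A (fst (t n)) (w n))"
proof -
  obtain q q' where "t n = (q, w n, q')" "q \<in> states A" "q' \<in> reach (\<sigma> n q) (trans A q (w n))"
    using assms(2)[of n] unfolding box_def by blast
  moreover have "q' = fst (t (Suc n))" using assms(1)[of n] \<open>t n = (q, w n, q')\<close> by simp
  ultimately show "t n = (fst (t n), w n, fst (t (Suc n)))" and "fst (t n) \<in> states A"
    and "fst (t (Suc n)) \<in> reach (\<sigma> n (fst (t n))) (trans A (fst (t n)) (w n))"
    by simp_all
qed

text \<open>The model-checking game of \<open>A\<close> on \<open>w\<close>, with all of Eve's disjunction choices in a
  round bundled into one move: at \<open>At i q\<close> she commits to the atoms \<open>reach s\<close> of some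
  local strategy \<open>s\<close>, Adam picks one of them, and the \<open>Move\<close> vertex carries the priority
  of the transition taken. Positional strategies of Eve are then box sequences.\<close>

datatype 'q mc_vertex = At nat 'q | Commit nat 'q "'q set" | Move nat 'q 'q

definition commitments :: "('q, 'a) apa \<Rightarrow> 'q \<Rightarrow> 'a \<Rightarrow> 'q set set" where
  "commitments A q a = {reach s (trans A q a) | s. True}"

fun mc_edges :: "('q, 'a) apa \<Rightarrow> (nat \<Rightarrow> 'a) \<Rightarrow> 'q mc_vertex \<Rightarrow> 'q mc_vertex set" where
  "mc_edges A w (At i q) = Commit i q ` commitments A q (w i)"
| "mc_edges A w (Commit i q S) = Move i q ` (S \<inter> atoms (trans A q (w i)))"
    \<comment> \<open>the intersection keeps junk vertices outside \<open>mc_arena\<close> finitely branching\<close>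
| "mc_edges A w (Move i q q') = {At (Suc i) q'}"

fun mc_owner :: "'q mc_vertex \<Rightarrow> bool" where
  "mc_owner (At i q) = True"
| "mc_owner (Commit i q S) = False"
| "mc_owner (Move i q q') = True"

fun mc_prio :: "('q, 'a) apa \<Rightarrow> (nat \<Rightarrow> 'a) \<Rightarrow> 'q mc_vertex \<Rightarrow> nat" where
  "mc_prio A w (At i q) = 0"
| "mc_prio A w (Commit i q S) = 0"
| "mc_prio A w (Move i q q') = prio A q (w i) q'"

definition mc_arena :: "('q, 'a) apa \<Rightarrow> (nat \<Rightarrow> 'a) \<Rightarrow> 'q mc_vertex set" where
  "mc_arena A w = {v. case v of
      At i q \<Rightarrow> q \<in> states A
    | Commit i q S \<Rightarrow> q \<in> states A \<and> S \<in> commitments A q (w i)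
    | Move i q q' \<Rightarrow> q \<in> states A \<and> q' \<in> states A}"

lemma mc_arena_simps [simp]:
  "At i q \<in> mc_arena A w \<longleftrightarrow> q \<in> states A"
  "Commit i q S \<in> mc_arena A w \<longleftrightarrow> q \<in> states A \<and> S \<in> commitments A q (w i)"
  "Move i q q' \<in> mc_arena A w \<longleftrightarrow> q \<in> states A \<and> q' \<in> states A"
  unfolding mc_arena_def by simp_all

lemma commitments_iff: "S \<in> commitments A q a \<longleftrightarrow> (\<exists>s. S = reach s (trans A q a))"
  unfolding commitments_def by simp

lemma finite_commitments: "finite (commitments A q a)"
proof -
  have "commitments A q a \<subseteq> Pow (atoms (trans A q a))"
  proof
    fix S assume "S \<in> commitments A q a"
    then obtain s where "S = reach s (trans A q a)" unfolding commitments_iff ..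
    then show "S \<in> Pow (atoms (trans A q a))" using reach_subset_atoms by simp
  qed
  then show ?thesis using finite_atoms finite_subset by blast
qed

lemma commitments_nonempty:
  assumes "S \<in> commitments A q a"
  shows "S \<noteq> {}"
proof -
  obtain s where "S = reach s (trans A q a)" using assms unfolding commitments_iff ..
  then show ?thesis using reach_nonempty by simp
qed

lemma parity_game_mc: "parity_game (mc_edges A w)"
proof
  fix v show "finite (mc_edges A w v)"
    by (cases v) (auto simp: finite_commitments finite_atoms)
qed

definition transition_priorities :: "('q, 'a) apa \<Rightarrow> nat set" where
  "transition_priorities A = (\<lambda>(q, a, q'). prio A q a q') ` (states A \<times> alph A \<times> states A)"

lemma finite_transition_priorities: "wf_apa A \<Longrightarrow> finite (transition_priorities A)"
  unfolding transition_priorities_def wf_apa_def by simp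

lemma transition_prioritiesI:
  "q \<in> states A \<Longrightarrow> a \<in> alph A \<Longrightarrow> q' \<in> states A \<Longrightarrow> prio A q a q' \<in> transition_priorities A"
  unfolding transition_priorities_def by force

definition round_path :: "(nat \<Rightarrow> 'q) \<Rightarrow> (nat \<Rightarrow> 'q set) \<Rightarrow> nat \<Rightarrow> 'q mc_vertex" where
  "round_path qs Ss k = (let n = k div 3 in
     if k mod 3 = 0 then At n (qs n) else if k mod 3 = 1 then Commit n (qs n) (Ss n)
     else Move n (qs n) (qs (Suc n)))"

lemma round_path_simps [simp]:
  "round_path qs Ss 0 = At 0 (qs 0)"
  "round_path qs Ss (3 * n) = At n (qs n)"
  "round_path qs Ss (Suc (3 * n)) = Commit n (qs n) (Ss n)"
  "round_path qs Ss (Suc (Suc (3 * n))) = Move n (qs n) (qs (Suc n))"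
  "round_path qs Ss (Suc (Suc (Suc (3 * n)))) = At (Suc n) (qs (Suc n))"
proof -
  have "Suc (3 * n) mod 3 = 1" "Suc (3 * n) div 3 = n"
    "Suc (Suc (3 * n)) mod 3 = 2" "Suc (Suc (3 * n)) div 3 = n"
    "Suc (Suc (Suc (3 * n))) = 3 * Suc n"
    by presburger+
  then show "round_path qs Ss 0 = At 0 (qs 0)" "round_path qs Ss (3 * n) = At n (qs n)"
    "round_path qs Ss (Suc (3 * n)) = Commit n (qs n) (Ss n)"
    "round_path qs Ss (Suc (Suc (3 * n))) = Move n (qs n) (qs (Suc n))"
    "round_path qs Ss (Suc (Suc (Suc (3 * n)))) = At (Suc n) (qs (Suc n))"
    unfolding round_path_def Let_def by simp_all
qed

text \<open>Adam can realise any choice \<open>c\<close> within the commitment given by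
  \<open>commitment_within_descents\<close>, since all its atoms are outcomes of Eve's descent.\<close>

lemma adam_steers_play:
  assumes choice: "\<And>n q S. S \<noteq> {} \<Longrightarrow> c n q S \<in> S"
  shows "\<exists>u Ss. \<forall>n. Ss n \<in> commitments A (snd (play A ltr e u n)) (ltr (fst (play A ltr e u n))) \<and>
      snd (play A ltr e u (Suc n)) = c n (snd (play A ltr e u n)) (Ss n)"
proof -
  define outcomes where
    "outcomes h a = {descend (e h a) u' [] (trans A (last_state A h) a) | u'. True}" for h a
  define S where "S h a = (SOME S. S \<in> commitments A (last_state A h) a \<and> S \<subseteq> outcomes h a)" for h a
  have S: "S h a \<in> commitments A (last_state A h) a \<and> S h a \<subseteq> outcomes h a" for h a
  proof -
    obtain s where "reach s (trans A (last_state A h) a) \<subseteq> outcomes h a"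
      using commitment_within_descents[of "trans A (last_state A h) a" "e h a"]
      unfolding outcomes_def ..
    then have "\<exists>S. S \<in> commitments A (last_state A h) a \<and> S \<subseteq> outcomes h a"
      unfolding commitments_iff by blast
    then show ?thesis unfolding S_def by (rule someI_ex)
  qed
  define u where "u h a = (SOME u'. descend (e h a) u' [] (trans A (last_state A h) a) =
      c (length h) (last_state A h) (S h a))" for h a
  have u: "descend (e h a) (u h a) [] (trans A (last_state A h) a) = c (length h) (last_state A h) (S h a)"
    for h a
  proof -
    have "S h a \<noteq> {}" using commitments_nonempty[OF S[THEN conjunct1]] .
    then have "c (length h) (last_state A h) (S h a) \<in> outcomes h a" using choice S by blast
    then have "\<exists>u'. descend (e h a) u' [] (trans A (last_state A h) a) =
        c (length h) (last_state A h) (S h a)"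
      unfolding outcomes_def by auto
    then show ?thesis unfolding u_def by (rule someI_ex)
  qed
  define Ss where "Ss n = S (fst (play A ltr e u n)) (ltr (fst (play A ltr e u n)))" for n
  have "Ss n \<in> commitments A (snd (play A ltr e u n)) (ltr (fst (play A ltr e u n))) \<and>
      snd (play A ltr e u (Suc n)) = c n (snd (play A ltr e u n)) (Ss n)" for n
    using S u unfolding Ss_def play_snd_Suc Let_def play_last_state[of A ltr e u n]
    by (simp add: length_play)
  then show ?thesis by blast
qed

text \<open>Adam's move at \<open>Commit n q S\<close> under \<open>s\<close>, made total by an arbitrary atom of \<open>S\<close>
  where \<open>s\<close> is not a legal move.\<close>

definition commit_response :: "('q mc_vertex \<Rightarrow> 'q mc_vertex) \<Rightarrow> nat \<Rightarrow> 'q \<Rightarrow> 'q set \<Rightarrow> 'q" where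
  "commit_response s n q S =
     (SOME q'. q' \<in> S \<and> (s (Commit n q S) \<in> Move n q ` S \<longrightarrow> s (Commit n q S) = Move n q q'))"

lemma commit_response:
  assumes "S \<noteq> {}"
  shows "commit_response s n q S \<in> S"
    and "s (Commit n q S) \<in> Move n q ` S \<Longrightarrow> s (Commit n q S) = Move n q (commit_response s n q S)"
proof -
  have "\<exists>q'. q' \<in> S \<and> (s (Commit n q S) \<in> Move n q ` S \<longrightarrow> s (Commit n q S) = Move n q q')"
  proof (cases "s (Commit n q S) \<in> Move n q ` S")
    case True
    then show ?thesis by blast
  next
    case False
    then show ?thesis using assms by blast
  qed
  then have "commit_response s n q S \<in> S \<and>
      (s (Commit n q S) \<in> Move n q ` S \<longrightarrow> s (Commit n q S) = Move n q (commit_response s n q S))"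
    unfolding commit_response_def by (rule someI_ex)
  then show "commit_response s n q S \<in> S"
    and "s (Commit n q S) \<in> Move n q ` S \<Longrightarrow> s (Commit n q S) = Move n q (commit_response s n q S)"
    by blast+
qed

context
  fixes A :: "('q, 'a) apa" and w :: "nat \<Rightarrow> 'a"
  assumes wf: "wf_apa A" and letters: "\<And>i. w i \<in> alph A"
begin

interpretation mc: parity_game "mc_edges A w" mc_owner "mc_prio A w"
  by (rule parity_game_mc)

lemma commitments_subset_states:
  assumes "q \<in> states A" "S \<in> commitments A q (w i)"
  shows "S \<subseteq> atoms (trans A q (w i)) \<inter> states A"
proof -
  obtain s where "S = reach s (trans A q (w i))"
    using assms(2) unfolding commitments_iff ..
  then show ?thesis
    using reach_subset_atoms[of s "trans A q (w i)"] atoms_trans_subset_states[OF wf assms(1) letters[of i]]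
    by blast
qed

lemma mc_subgame: "mc.subgame (mc_arena A w)"
  unfolding mc.subgame_def
proof
  fix v assume v: "v \<in> mc_arena A w"
  show "mc_edges A w v \<inter> mc_arena A w \<noteq> {}"
  proof (cases v)
    case (At i q)
    have "reach (\<lambda>_. False) (trans A q (w i)) \<in> commitments A q (w i)"
      unfolding commitments_iff by blast
    then show ?thesis using At v by auto
  next
    case (Commit i q S)
    with v have q: "q \<in> states A" and S: "S \<in> commitments A q (w i)" by simp_all
    then obtain q' where "q' \<in> S" using commitments_nonempty[OF S] by blast
    then have "Move i q q' \<in> mc_edges A w v \<inter> mc_arena A w"
      using commitments_subset_states[OF q S] Commit q by auto
    then show ?thesis by blast
  qed (use v in auto)
qed

lemma mc_prio_bounded: "\<exists>d. \<forall>v\<in>mc_arena A w. mc_prio A w v < d"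
proof
  let ?d = "Suc (Max (insert 0 (transition_priorities A)))"
  show "\<forall>v\<in>mc_arena A w. mc_prio A w v < ?d"
  proof
    fix v assume v: "v \<in> mc_arena A w"
    have "mc_prio A w v \<in> insert 0 (transition_priorities A)"
      using v letters by (cases v) (auto intro: transition_prioritiesI)
    then show "mc_prio A w v < ?d"
      using finite_transition_priorities[OF wf] by (simp add: le_imp_less_Suc)
  qed
qed

lemma round_path_in_arena:
  assumes states: "\<And>n. qs n \<in> states A" and commit: "\<And>n. Ss n \<in> commitments A (qs n) (w n)"
    and pick: "\<And>n. qs (Suc n) \<in> Ss n"
  shows "mc.path_in (mc_arena A w) (round_path qs Ss)"
  unfolding mc.path_in_def
proof
  fix k
  show "round_path qs Ss (Suc k) \<in> mc_edges A w (round_path qs Ss k) \<inter> mc_arena A w"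
  proof (cases k rule: mod_3_cases)
    case (2 n)
    then show ?thesis
      using states pick commitments_subset_states[OF states commit] by fastforce
  qed (use states commit in simp_all)
qed

lemma round_path_wins:
  assumes states: "\<And>n. qs n \<in> states A"
  shows "mc.wins p (round_path qs Ss) \<longleftrightarrow> parity_acc (\<lambda>n. prio A (qs n) (w n) (qs (Suc n))) = p"
proof -
  define f where "f n = prio A (qs n) (w n) (qs (Suc n))" for n
  define g where "g k = mc_prio A w (round_path qs Ss k)" for k
  have g: "g k = (if k mod 3 = 2 then f (k div 3) else 0)" for k
  proof (cases k rule: mod_3_cases)
    case (2 n)
    moreover have "Suc (3 * n) mod 3 = 1" by presburger
    ultimately show ?thesis unfolding g_def by simp
  next
    case (3 n)
    moreover have "Suc (Suc (3 * n)) mod 3 = 2" "Suc (Suc (3 * n)) div 3 = n" by presburger+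
    ultimately show ?thesis unfolding g_def f_def by simp
  qed (simp add: g_def)
  have "range f \<subseteq> transition_priorities A"
    unfolding f_def using states letters by (auto intro: transition_prioritiesI)
  then have "finite (range f)"
    using finite_transition_priorities[OF wf] finite_subset by blast
  moreover have "INFM k. g k = 0"
  proof -
    have "INFM k::nat. k mod 3 = 0 \<and> True" using INFM_div_mod[of 0 3 "\<lambda>_. True"] by simp
    then show ?thesis by (rule INFM_mono) (simp add: g)
  qed
  moreover have "(INFM k. g k = p') \<longleftrightarrow> (INFM n. f n = p')" if "p' \<noteq> 0" for p'
  proof -
    have "g k = p' \<longleftrightarrow> k mod 3 = 2 \<and> f (k div 3) = p'" for k
      using that by (simp add: g)
    then show ?thesis using INFM_div_mod[of 2 3 "\<lambda>n. f n = p'"] by simp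
  qed
  ultimately have "parity_acc g \<longleftrightarrow> parity_acc f"
    by (rule parity_acc_pad_zeros)
  then show ?thesis
    unfolding mc.wins_def g_def f_def by simp
qed

lemma eve_dominion_box_word:
  assumes dom: "mc.dominion (mc_arena A w) True W s" and init: "At 0 (init A) \<in> W"
  shows "\<exists>\<beta>. (\<forall>i. \<beta> i \<in> boxes_letter A (w i)) \<and> univ_acc A \<beta>"
proof -
  note conf = mc.dominionD(1)[OF dom]
  define \<sigma> where "\<sigma> i q = (SOME s'. s (At i q) = Commit i q (reach s' (trans A q (w i))))" for i q
  have \<sigma>: "s (At i q) = Commit i q (reach (\<sigma> i q) (trans A q (w i)))" if "At i q \<in> W" for i q
  proof -
    have "s (At i q) \<in> mc_edges A w (At i q)"
      using mc.confinesD(2)[OF conf that] by simp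
    then have "\<exists>s'. s (At i q) = Commit i q (reach s' (trans A q (w i)))"
      by (auto simp: commitments_iff)
    then show ?thesis unfolding \<sigma>_def by (rule someI_ex)
  qed
  define \<beta> where "\<beta> i = box A (w i) (\<sigma> i)" for i
  have "univ_acc A \<beta>"
    unfolding univ_acc_def
  proof (intro allI impI)
    fix t assume t: "fst (t 0) = init A \<and> (\<forall>i. snd (snd (t i)) = fst (t (Suc i))) \<and> (\<forall>i. t i \<in> \<beta> i)"
    define qs where "qs n = fst (t n)" for n
    define Ss where "Ss n = reach (\<sigma> n (qs n)) (trans A (qs n) (w n))" for n
    have "\<And>i. snd (snd (t i)) = fst (t (Suc i))" "\<And>i. t i \<in> box A (w i) (\<sigma> i)"
      using t unfolding \<beta>_def by blast+
    note chain = box_chain[where t = t and A = A and w = w and \<sigma> = \<sigma>, OF this, folded qs_def]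
    have t_eq: "t n = (qs n, w n, qs (Suc n))" and states: "qs n \<in> states A"
      and pick: "qs (Suc n) \<in> Ss n" for n
      using chain[of n] unfolding Ss_def by simp_all
    have commit: "Ss n \<in> commitments A (qs n) (w n)" for n
      unfolding Ss_def commitments_iff by blast
    let ?\<pi> = "round_path qs Ss"
    have "mc.wins True ?\<pi>"
    proof (rule mc.dominion_wins_from[OF dom round_path_in_arena[OF states commit pick]])
      show "?\<pi> 0 \<in> W" using init t unfolding qs_def by simp
    next
      fix k assume k: "?\<pi> k \<in> W" "mc_owner (?\<pi> k) = True"
      show "?\<pi> (Suc k) = s (?\<pi> k)"
      proof (cases k rule: mod_3_cases)
        case (1 n)
        then show ?thesis using \<sigma> k(1) unfolding Ss_def by simp
      next
        case (2 n)
        then show ?thesis using k(2) by simp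
      next
        case (3 n)
        then show ?thesis using mc.confinesD(2)[OF conf k] by simp
      qed
    qed
    then show "acc_trans A t"
      unfolding acc_trans_def round_path_wins[OF states] t_eq by simp
  qed
  moreover have "\<beta> i \<in> boxes_letter A (w i)" for i
    unfolding \<beta>_def boxes_letter_def by blast
  ultimately show ?thesis by blast
qed

lemma adam_dominion_refutes:
  assumes dom: "mc.dominion (mc_arena A w) False W s" and init: "At 0 (init A) \<in> W"
  shows "w \<notin> apa_lang A"
proof
  assume "w \<in> apa_lang A"
  then obtain e where e_wins: "\<And>u. acc_trans A (play_trans A (\<lambda>h. w (length h)) e u)"
    unfolding apa_lang_def by blast
  let ?c = "commit_response s"
  from adam_steers_play[of ?c A "\<lambda>h. w (length h)" e, OF commit_response(1)] obtain u Ss where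
    "\<forall>n. Ss n \<in> commitments A (snd (play A (\<lambda>h. w (length h)) e u n)) (w (length (fst (play A (\<lambda>h. w (length h)) e u n)))) \<and>
      snd (play A (\<lambda>h. w (length h)) e u (Suc n)) = ?c n (snd (play A (\<lambda>h. w (length h)) e u n)) (Ss n)"
    by blast
  moreover define qs where "qs n = snd (play A (\<lambda>h. w (length h)) e u n)" for n
  ultimately have commit: "Ss n \<in> commitments A (qs n) (w n)"
    and next_state: "qs (Suc n) = ?c n (qs n) (Ss n)" for n
    by (simp_all add: length_play)
  have pick: "qs (Suc n) \<in> Ss n" for n
    using commit_response(1)[OF commitments_nonempty[OF commit]] next_state by simp
  have states: "qs n \<in> states A" for n
    unfolding qs_def using play_in_states[OF wf letters] .
  let ?\<pi> = "round_path qs Ss"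
  have "mc.wins False ?\<pi>"
  proof (rule mc.dominion_wins_from[OF dom round_path_in_arena[OF states commit pick]])
    show "?\<pi> 0 \<in> W" using init unfolding qs_def by simp
  next
    fix k assume k: "?\<pi> k \<in> W" "mc_owner (?\<pi> k) = False"
    obtain n where k_eq: "k = Suc (3 * n)"
    proof (cases k rule: mod_3_cases)
      case (2 n)
      then show ?thesis by (rule that)
    qed (use k(2) in simp_all)
    have "s (Commit n (qs n) (Ss n)) \<in> Move n (qs n) ` Ss n"
      using mc.confinesD(2)[OF mc.dominionD(1)[OF dom] k] k_eq by auto
    with k_eq show "?\<pi> (Suc k) = s (?\<pi> k)"
      using commit_response(2)[OF commitments_nonempty[OF commit]] next_state by simp
  qed
  moreover have "play_trans A (\<lambda>h. w (length h)) e u n = (qs n, w n, qs (Suc n))" for n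
    unfolding play_trans_eq qs_def by (simp add: length_play)
  ultimately show False
    using e_wins[of u] unfolding acc_trans_def round_path_wins[OF states] by simp
qed

lemma apa_lang_box_word:
  assumes "w \<in> apa_lang A"
  shows "\<exists>\<beta>. (\<forall>i. \<beta> i \<in> boxes_letter A (w i)) \<and> univ_acc A \<beta>"
proof -
  obtain d where "\<forall>v\<in>mc_arena A w. mc_prio A w v < d" using mc_prio_bounded ..
  then obtain W s W' s' where cover: "mc_arena A w \<subseteq> W \<union> W'"
    and eve: "mc.dominion (mc_arena A w) True W s" and adam: "mc.dominion (mc_arena A w) False W' s'"
    using mc.positional_determinacy[OF mc_subgame, of d True] by auto
  have "At 0 (init A) \<in> mc_arena A w" using init_in_states[OF wf] by simp
  then show ?thesis
    using cover eve_dominion_box_word[OF eve] adam_dominion_refutes[OF adam] assms by blast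
qed

end

lemma apa_lang_subset_BA_lang:
  assumes "wf_apa A" "recognises_univ_acc A B"
  shows "apa_lang A \<subseteq> BA_lang A B"
proof
  fix w assume w: "w \<in> apa_lang A"
  then have letters: "\<And>i. w i \<in> alph A" unfolding apa_lang_def by blast
  obtain \<beta> where \<beta>: "\<And>i. \<beta> i \<in> boxes_letter A (w i)" "univ_acc A \<beta>"
    using apa_lang_box_word[OF assms(1) letters w] by blast
  have "\<forall>i. \<beta> i \<in> boxes A" using \<beta>(1) letters unfolding boxes_def by blast
  then have "dpa_accepts B \<beta>" using assms(2) \<beta>(2) unfolding recognises_univ_acc_def by blast
  then show "w \<in> BA_lang A B" unfolding BA_lang_def using letters \<beta>(1) by blast
qed

section \<open>Transferring the GFG strategy\<close>

lemma length_gfg_play: "length (gfg_play ad ev n) = n"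
  by (induction n) (simp_all add: Let_def)

lemma gfg_play_cong:
  "(\<And>H. length H < n \<Longrightarrow> ad H = ad' H) \<Longrightarrow> gfg_play ad ev n = gfg_play ad' ev n"
proof (induction n)
  case (Suc n)
  then have "gfg_play ad ev n = gfg_play ad' ev n" by simp
  moreover have "ad (gfg_play ad ev n) = ad' (gfg_play ad ev n)"
    using Suc.prems length_gfg_play[of ad ev n] by simp
  ultimately show ?case by (simp add: Let_def)
qed simp

lemma gfg_play_nth:
  "gfg_play ad ev (Suc i) ! i = (ad (gfg_play ad ev i), ev (gfg_play ad ev i) (ad (gfg_play ad ev i)))"
  using length_gfg_play[of ad ev i] by (simp add: Let_def nth_append)

text \<open>Eve replays the GFG strategy \<open>ev\<close> of \<open>B_A\<close> on the letters read so far and resolves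
  the disjunctions of the current transition condition by the local strategy of the box
  that \<open>ev\<close> picks for the current letter.\<close>

definition box_strategy ::
  "('q, 'a) apa \<Rightarrow> (('a \<times> ('q \<times> 'a \<times> 'q) set) list \<Rightarrow> 'a \<Rightarrow> ('q \<times> 'a \<times> 'q) set) \<Rightarrow> ('q, 'a) strat"
  where
  "box_strategy A ev h a p =
     (let \<beta> = ev (gfg_play (\<lambda>H. fst (snd (h ! length H))) ev (length h)) a;
          \<sigma> = (SOME \<sigma>. \<beta> = box A a \<sigma>); q = last_state A h
      in \<sigma> q (subformula_at (trans A q a) p))"

lemma box_strategy_in_boxes:
  fixes A :: "('q, 'a) apa" and u :: "('q, 'a) strat"
  assumes "wf_apa A" and ltr: "\<And>h. ltr h \<in> alph A"
    and ev: "\<And>h a. a \<in> alph A \<Longrightarrow> ev h a \<in> boxes_letter A a"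
  defines "W \<equiv> \<lambda>i. fst (snd (play_trans A ltr (box_strategy A ev) u i))"
  shows "play_trans A ltr (box_strategy A ev) u i \<in> ev (gfg_play (\<lambda>H. W (length H)) ev i) (W i)"
proof -
  let ?e = "box_strategy A ev"
  define h where "h = fst (play A ltr ?e u i)"
  define q where "q = snd (play A ltr ?e u i)"
  define \<beta> where "\<beta> = ev (gfg_play (\<lambda>H. W (length H)) ev i) (W i)"
  have W_i: "W i = ltr h" unfolding W_def h_def by (simp add: play_trans_eq)
  have "gfg_play (\<lambda>H. fst (snd (h ! length H))) ev i = gfg_play (\<lambda>H. W (length H)) ev i"
    by (rule gfg_play_cong) (simp add: h_def play_fst_eq_map W_def)
  then have \<beta>_eq: "\<beta> = ev (gfg_play (\<lambda>H. fst (snd (h ! length H))) ev (length h)) (ltr h)"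
    unfolding \<beta>_def W_i h_def length_play by simp
  have "\<exists>\<sigma>. \<beta> = box A (ltr h) \<sigma>"
    using ev[OF ltr[of h]] unfolding \<beta>_eq boxes_letter_def by blast
  then have \<sigma>: "\<beta> = box A (ltr h) (SOME \<sigma>. \<beta> = box A (ltr h) \<sigma>)"
    by (rule someI_ex)
  have "snd (play A ltr ?e u (Suc i)) \<in> reach ((SOME \<sigma>. \<beta> = box A (ltr h) \<sigma>) q) (trans A q (ltr h))"
    unfolding play_snd_Suc Let_def box_strategy_def h_def[symmetric] q_def[symmetric] \<beta>_eq[symmetric]
      play_last_state[of A ltr ?e u i, folded h_def q_def]
    by (rule descend_local_strategy) simp
  moreover have "q \<in> states A" unfolding q_def using play_in_states[OF assms(1) ltr] .
  ultimately have "play_trans A ltr ?e u i \<in> box A (ltr h) (SOME \<sigma>. \<beta> = box A (ltr h) \<sigma>)"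
    unfolding play_trans_eq box_def h_def[symmetric] q_def[symmetric] by simp
  then show ?thesis using \<sigma> W_i unfolding \<beta>_def by simp
qed

lemma univ_acc_play:
  assumes "univ_acc A \<beta>" "\<And>i. play_trans A ltr e u i \<in> \<beta> i"
  shows "acc_trans A (play_trans A ltr e u)"
proof -
  have "fst (play_trans A ltr e u 0) = init A"
    and "snd (snd (play_trans A ltr e u i)) = fst (play_trans A ltr e u (Suc i))" for i
    by (simp_all add: play_trans_eq)
  then show ?thesis using assms unfolding univ_acc_def by blast
qed

lemma box_strategy_wins:
  fixes A :: "('q, 'a) apa" and u :: "('q, 'a) strat"
  assumes "wf_apa A" "recognises_univ_acc A B" and ltr: "\<And>h. ltr h \<in> alph A"
    and ev_boxes: "\<And>h a. a \<in> alph A \<Longrightarrow> ev h a \<in> boxes_letter A a"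
    and ev_wins: "\<And>ad. \<forall>h. ad h \<in> alph A \<Longrightarrow>
      (\<lambda>i. fst (gfg_play ad ev (Suc i) ! i)) \<notin> BA_lang A B \<or>
      dpa_accepts B (\<lambda>i. snd (gfg_play ad ev (Suc i) ! i))"
  defines "t \<equiv> play_trans A ltr (box_strategy A ev) u"
  assumes "(\<lambda>i. fst (snd (t i))) \<in> apa_lang A"
  shows "acc_trans A t"
proof -
  define W where "W i = fst (snd (t i))" for i
  define \<beta> where "\<beta> i = ev (gfg_play (\<lambda>H. W (length H)) ev i) (W i)" for i
  have W_alph: "W i \<in> alph A" for i
    using ltr unfolding W_def t_def by (simp add: play_trans_eq)
  have "gfg_play (\<lambda>H. W (length H)) ev (Suc i) ! i = (W i, \<beta> i)" for i
    unfolding gfg_play_nth \<beta>_def length_gfg_play ..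
  moreover have "W \<in> BA_lang A B"
    using apa_lang_subset_BA_lang[OF assms(1,2)] assms(7) unfolding W_def by blast
  ultimately have "dpa_accepts B \<beta>"
    using ev_wins[of "\<lambda>H. W (length H)"] W_alph by simp
  moreover have "\<forall>i. \<beta> i \<in> boxes A"
    using ev_boxes W_alph unfolding \<beta>_def boxes_def by blast
  ultimately have "univ_acc A \<beta>"
    using assms(2) unfolding recognises_univ_acc_def by blast
  moreover have "t i \<in> \<beta> i" for i
    using box_strategy_in_boxes[where u = u, OF assms(1) ltr ev_boxes]
    unfolding \<beta>_def W_def t_def .
  ultimately show "acc_trans A t"
    unfolding t_def by (rule univ_acc_play)
qed

theorem mainTheorem7:
  fixes A :: "('q, 'a) apa" and B :: "('p, ('q \<times> 'a \<times> 'q) set) dpa"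
  assumes "wf_apa A"
    and "recognises_univ_acc A B"
    and "BA_gfg A B"
  shows "exists_gfg A"
proof -
  obtain ev where "\<And>h a. a \<in> alph A \<Longrightarrow> ev h a \<in> boxes_letter A a"
    and "\<And>ad. \<forall>h. ad h \<in> alph A \<Longrightarrow>
      (\<lambda>i. fst (gfg_play ad ev (Suc i) ! i)) \<notin> BA_lang A B \<or>
      dpa_accepts B (\<lambda>i. snd (gfg_play ad ev (Suc i) ! i))"
    using assms(3) unfolding BA_gfg_def by blast
  then show ?thesis
    unfolding exists_gfg_def using box_strategy_wins[OF assms(1,2)] by blast
qed

end
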